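(* Let $X=(X,d,\mu)$ be a metric measure space with $\mu$ uniformly locally doubling. If a measure $\mathfrak m$ on $X$ is weakly noncollapsed, then $\mathfrak m$ has the uniformly weak asymptotically doubling property. Furthermore, for every $c>1$ and every $Q\in\operatorname{Q}_\mu(1)$, $\underline{C}_{\mathfrak m}(c)\le 2^{([c]+1)Q}$, where $[c]=\max\{k\in\mathbb Z:k\le c\}$.
   Context: A metric measure space is a triple $X=(X,d,\mu)$ with $(X,d)$ a complete separable metric space and $\mu$ a Borel regular measure with $0<\mu(B)<\infty$ for every ball $B$ and $\operatorname{supp}\mu=X$. All balls are closed: $B_r(x)=\{y:d(x,y)\le r\}$. A measure on $X$ means a nonzero Borel regular locally finite (outer) measure. $\mu$ is uniformly locally doubling if for every $R>0$, $\sup_{r\in(0,R]}\sup_{x}\mu(B_{2r}(x))/\mu(B_r(x))<\infty$. A measure $\mathfrak m$ is weakly noncollapsed if $\inf_{x\in\operatorname{supp}\mathfrak m}\liminf_{r\to0}\mathfrak m(B_r(x))/\mu(B_r(x))>0$. $\mathfrak m$ has the uniformly weak asymptotically doubling property if for every $c>0$, $\underline C_{\mathfrak m}(c):=\lim_{R\to0^+}\sup_{x\in\operatorname{supp}\mathfrak m}\inf_{r\in(0,R]}\mathfrak m(B_{cr}(x))/\mathfrak m(B_r(x))<\infty$. $\mu$ has relative lower volume decay of order $Q>0$ up to scale $R$ if there is $C(Q,R)>0$ such that $(r(B')/r(B))^Q\le C(Q,R)\mu(B')/\mu(B)$ for all closed balls $B'\subset B$ with $r(B)<R$; $\operatorname{Q}_\mu(R)$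 denotes the set of all such $Q$. *)

theory Defs
  imports "HOL-Analysis.Analysis"
begin

text \<open>The ambient space X is the whole type 'a, a complete separable metric space
  (class polish_space = complete metric space with second countable topology).\<close>

definition mms_measure :: "'a::polish_space measure \<Rightarrow> bool" where
  "mms_measure mu \<longleftrightarrow> sets mu = sets borel \<and>
     (\<forall>x r. r > 0 \<longrightarrow> 0 < emeasure mu (cball x r) \<and> emeasure mu (cball x r) < \<infinity>)"

definition unif_loc_doubling :: "'a::polish_space measure \<Rightarrow> bool" where
  "unif_loc_doubling mu \<longleftrightarrow>
     (\<forall>R>0. \<exists>C::real. \<forall>r\<in>{0<..R}. \<forall>x.
        measure mu (cball x (2*r)) \<le> C * measure mu (cball x r))"

definition measure_on :: "'a::polish_space measure \<Rightarrow> bool" where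
  "measure_on m \<longleftrightarrow> sets m = sets borel \<and> emeasure m (space m) \<noteq> 0 \<and>
     (\<forall>x. \<exists>r>0. emeasure m (cball x r) < \<infinity>)"

definition msupp :: "'a::metric_space measure \<Rightarrow> 'a set" where
  "msupp m = {x. \<forall>r>0. 0 < emeasure m (cball x r)}"

definition weakly_noncollapsed :: "'a::polish_space measure \<Rightarrow> 'a measure \<Rightarrow> bool" where
  "weakly_noncollapsed mu m \<longleftrightarrow>
     (INF x\<in>msupp m. Liminf (at_right 0)
        (\<lambda>r. emeasure m (cball x r) / emeasure mu (cball x r))) > 0"

text \<open>Ratio m(B_{cr}(x))/m(B_r(x)) in [0,\<infinity>]; the undefined case \<infinity>/\<infinity> is read as \<infinity>
  (the conservative convention: such radii do not help to make the infimum small).\<close>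
definition dratio :: "'a::metric_space measure \<Rightarrow> real \<Rightarrow> real \<Rightarrow> 'a \<Rightarrow> ennreal" where
  "dratio m c r x =
     (if emeasure m (cball x r) = \<infinity> \<and> emeasure m (cball x (c*r)) = \<infinity> then \<infinity>
      else emeasure m (cball x (c*r)) / emeasure m (cball x r))"

definition lowerC :: "'a::metric_space measure \<Rightarrow> real \<Rightarrow> ennreal" where
  "lowerC m c = Lim (at_right 0)
     (\<lambda>R::real. SUP x\<in>msupp m. INF r\<in>{0<..R}. dratio m c r x)"

definition unif_weak_asymp_doubling :: "'a::metric_space measure \<Rightarrow> bool" where
  "unif_weak_asymp_doubling m \<longleftrightarrow> (\<forall>c>0. lowerC m c < \<infinity>)"

definition Qset :: "'a::polish_space measure \<Rightarrow> real \<Rightarrow> real set" where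
  "Qset mu R = {Q. Q > 0 \<and> (\<exists>C>0. \<forall>x r x' r'. 0 < r' \<longrightarrow> 0 < r \<longrightarrow> r < R \<longrightarrow>
        cball x' r' \<subseteq> cball x r \<longrightarrow>
        (r'/r) powr Q \<le> C * measure mu (cball x' r') / measure mu (cball x r))}"

end

theory Submission
  imports Defs
begin

(*
  For c <= 1 the ratios m(B_{cr}(x)) / m(B_r(x)) are at most 1. For c > 1 fix x in the support
  of m and the radii r_k = R / c^k. If every ratio with 0 < r <= R exceeded some L > K, then
  m(B_{r_k}(x)) <= L^-k m(B_R(x)). Weak noncollapsing gives m(B_{r_k}(x)) >= kappa mu(B_{r_k}(x))
  for small R, while iterated local doubling (K = C^n with c <= 2^n) as well as relative lower
  volume decay of order Q (K = c^Q) give mu(B_{r_k}(x)) >= A K^-k. Then (L/K)^k stays bounded,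
  which is absurd; so the infimum of the ratios is at most K, uniformly in x and R.
  The explicit bound follows from c^Q <= 2^(([c]+1)Q), as c < [c] + 1 <= 2^([c]+1).
*)

lemma Lim_at_right_le_if_antimono:
  fixes f :: "real \<Rightarrow> ennreal"
  assumes antimono: "\<And>a b. 0 < a \<Longrightarrow> a \<le> b \<Longrightarrow> f b \<le> f a"
    and bound: "\<And>R. 0 < R \<Longrightarrow> f R \<le> K"
  shows "Lim (at_right 0) f \<le> K"
proof -
  let ?l = "SUP R\<in>{0<..}. f R"
  have "(f \<longlongrightarrow> ?l) (at_right 0)"
  proof (rule increasing_tendsto)
    show "\<forall>\<^sub>F R in at_right 0. f R \<le> ?l"
      unfolding eventually_at_right_field
      by (rule exI[of _ 1]) (auto intro: SUP_upper)
  next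
    fix y assume "y < ?l"
    then obtain R1 where "R1 > 0" "y < f R1" by (auto simp: less_SUP_iff)
    then show "\<forall>\<^sub>F R in at_right 0. y < f R"
      unfolding eventually_at_right_field
      using antimono by (intro exI[of _ R1]) (auto intro: less_le_trans)
  qed
  then have "Lim (at_right 0) f = ?l"
    by (intro tendsto_Lim) simp
  also have "\<dots> \<le> K" using bound by (auto intro: SUP_least)
  finally show ?thesis .
qed

lemma lowerC_le:
  assumes "\<And>R x. 0 < R \<Longrightarrow> x \<in> msupp m \<Longrightarrow> (INF r\<in>{0<..R}. dratio m c r x) \<le> K"
  shows "lowerC m c \<le> K"
  unfolding lowerC_def
proof (rule Lim_at_right_le_if_antimono)
  fix a b :: real assume "0 < a" "a \<le> b"
  then show "(SUP x\<in>msupp m. INF r\<in>{0<..b}. dratio m c r x)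
      \<le> (SUP x\<in>msupp m. INF r\<in>{0<..a}. dratio m c r x)"
    by (intro SUP_subset_mono INF_superset_mono) auto
next
  fix R :: real assume "0 < R"
  then show "(SUP x\<in>msupp m. INF r\<in>{0<..R}. dratio m c r x) \<le> K"
    using assms by (auto intro: SUP_least)
qed

lemma emeasure_cball_mono:
  assumes "sets m = sets borel" "r \<le> s"
  shows "emeasure m (cball x r) \<le> emeasure m (cball x s)"
  using assms by (intro emeasure_mono) (auto simp: sets_eq_imp_space_eq)

lemma emeasure_cball_eq_measure:
  assumes "sets m = sets borel" "emeasure m (cball x s) < \<infinity>" "r \<le> s"
  shows "emeasure m (cball x r) = ennreal (measure m (cball x r))"
  using emeasure_cball_mono[OF assms(1,3), of x] assms(2)
  by (intro emeasure_eq_ennreal_measure) auto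

lemma measure_cball_pos_if_msupp:
  assumes "sets m = sets borel" "emeasure m (cball x s) < \<infinity>" "r \<le> s"
    and "x \<in> msupp m" "0 < r"
  shows "0 < measure m (cball x r)"
proof -
  have "0 < emeasure m (cball x r)" using assms(4,5) unfolding msupp_def by simp
  then show ?thesis using emeasure_cball_eq_measure[OF assms(1-3)] by simp
qed

lemma mms_measure_cball:
  assumes "mms_measure mu" "0 < r"
  shows "emeasure mu (cball x r) = ennreal (measure mu (cball x r))"
    and "0 < measure mu (cball x r)"
proof -
  have "0 < emeasure mu (cball x r)" "emeasure mu (cball x r) < \<infinity>"
    using assms unfolding mms_measure_def by auto
  then show "emeasure mu (cball x r) = ennreal (measure mu (cball x r))"
    by (simp add: emeasure_eq_ennreal_measure)
  with \<open>0 < emeasure mu (cball x r)\<close> show "0 < measure mu (cball x r)"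
    by simp
qed

lemma mms_measure_measure_cball_mono:
  assumes "mms_measure mu" "0 < s" "r \<le> s"
  shows "measure mu (cball x r) \<le> measure mu (cball x s)"
proof -
  have "sets mu = sets borel" using assms(1) unfolding mms_measure_def by simp
  then have "emeasure mu (cball x r) \<le> emeasure mu (cball x s)"
    using assms(3) by (rule emeasure_cball_mono)
  moreover have "emeasure mu (cball x s) < \<infinity>"
    using assms unfolding mms_measure_def by auto
  ultimately show ?thesis unfolding measure_def by (simp add: enn2real_mono)
qed

lemma dratio_eq_measure_ratio:
  assumes sets: "sets m = sets borel" and fin: "emeasure m (cball x s) < \<infinity>"
    and "x \<in> msupp m" "0 < r" "r \<le> s" "c * r \<le> s"
  shows "dratio m c r x = ennreal (measure m (cball x (c * r)) / measure m (cball x r))"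
proof -
  have "emeasure m (cball x r) < \<infinity>"
    using emeasure_cball_mono[OF sets \<open>r \<le> s\<close>] fin by (rule le_less_trans)
  then have "dratio m c r x = emeasure m (cball x (c * r)) / emeasure m (cball x r)"
    by (simp add: dratio_def)
  also have "\<dots> = ennreal (measure m (cball x (c * r))) / ennreal (measure m (cball x r))"
    using emeasure_cball_eq_measure[OF sets fin] assms(5,6) by simp
  also have "\<dots> = ennreal (measure m (cball x (c * r)) / measure m (cball x r))"
    using measure_cball_pos_if_msupp[OF sets fin] assms(3-5) by (intro divide_ennreal) auto
  finally show ?thesis .
qed

lemma INF_dratio_le_one:
  assumes m: "measure_on m" and x: "x \<in> msupp m" and c: "c \<le> 1" and R: "0 < R"
  shows "(INF r\<in>{0<..R}. dratio m c r x) \<le> 1"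
proof -
  obtain s where s: "0 < s" "emeasure m (cball x s) < \<infinity>"
    using m unfolding measure_on_def by auto
  have sets: "sets m = sets borel" using m unfolding measure_on_def by simp
  define r where "r = min R s"
  have r: "r \<in> {0<..R}" "r \<le> s" using R s unfolding r_def by auto
  have cr: "c * r \<le> r" using mult_right_mono[OF c, of r] r by simp
  then have "measure m (cball x (c * r)) \<le> measure m (cball x r)"
    using emeasure_cball_mono[OF sets cr, of x] emeasure_cball_eq_measure[OF sets s(2)]
      order_trans[OF cr r(2)] r(2) by simp
  then have "measure m (cball x (c * r)) / measure m (cball x r) \<le> 1"
    using measure_cball_pos_if_msupp[OF sets s(2) r(2) x] r by simp
  then have "dratio m c r x \<le> 1"
    using dratio_eq_measure_ratio[OF sets s(2) x _ r(2) order_trans[OF cr r(2)]] r by simp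
  then show ?thesis using r(1) by (meson INF_lower order_trans)
qed

lemma mult_power_le_if_ratio_chain:
  fixes M :: "nat \<Rightarrow> real"
  assumes chain: "\<And>k. L * M (Suc k) \<le> M k" and "0 \<le> L"
  shows "M k * L ^ k \<le> M 0"
proof (induction k)
  case (Suc k)
  have "M (Suc k) * L ^ Suc k = (L * M (Suc k)) * L ^ k" by simp
  also have "\<dots> \<le> M k * L ^ k" using chain \<open>0 \<le> L\<close> by (intro mult_right_mono) auto
  finally show ?case using Suc.IH by simp
qed simp

definition geometric_ball_decay :: "'a::metric_space measure \<Rightarrow> 'a \<Rightarrow> real \<Rightarrow> real \<Rightarrow> bool" where
  "geometric_ball_decay mu x c K \<longleftrightarrow>
     (\<exists>\<rho>>0. \<forall>R\<in>{0<..\<rho>}. \<exists>A>0. \<forall>k. A \<le> measure mu (cball x (R / c ^ k)) * K ^ k)"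

lemma noncollapsed_lower_bound:
  assumes mu: "mms_measure mu" and sets: "sets m = sets borel"
    and fin: "emeasure m (cball x s) < \<infinity>"
    and lim: "Liminf (at_right 0) (\<lambda>r. emeasure m (cball x r) / emeasure mu (cball x r)) > 0"
  obtains \<kappa> b where "0 < \<kappa>" "0 < b"
    "\<And>r. 0 < r \<Longrightarrow> r < b \<Longrightarrow> r \<le> s \<Longrightarrow> \<kappa> * measure mu (cball x r) \<le> measure m (cball x r)"
proof -
  obtain y where y: "0 < y" "y < Liminf (at_right 0) (\<lambda>r. emeasure m (cball x r) / emeasure mu (cball x r))"
    using dense[OF lim] by blast
  then obtain \<kappa> where \<kappa>: "y = ennreal \<kappa>" "0 < \<kappa>"
    by (cases y) (auto simp: top.not_eq_extremum)
  obtain b where b: "0 < b" and hb: "\<And>r. 0 < r \<Longrightarrow> r < b \<Longrightarrow>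
      ennreal \<kappa> < emeasure m (cball x r) / emeasure mu (cball x r)"
    using less_LiminfD[OF y(2)] unfolding \<kappa> eventually_at_right_field by auto
  have "\<kappa> * measure mu (cball x r) \<le> measure m (cball x r)"
    if r: "0 < r" "r < b" "r \<le> s" for r
  proof -
    have pos: "0 < measure mu (cball x r)" using mms_measure_cball[OF mu r(1)] by simp
    have "ennreal \<kappa> < ennreal (measure m (cball x r)) / ennreal (measure mu (cball x r))"
      using hb[OF r(1,2)] emeasure_cball_eq_measure[OF sets fin r(3)] mms_measure_cball[OF mu r(1)]
      by simp
    also have "\<dots> = ennreal (measure m (cball x r) / measure mu (cball x r))"
      using pos by (intro divide_ennreal) auto
    finally have "\<kappa> < measure m (cball x r) / measure mu (cball x r)"
      using \<kappa>(2) by (simp add: ennreal_less_iff)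
    then show ?thesis using pos by (simp add: field_simps)
  qed
  then show ?thesis using that \<kappa>(2) b by blast
qed

lemma measure_cball_mult_power_le_if_dratio_gt:
  assumes sets: "sets m = sets borel" and fin: "emeasure m (cball x s) < \<infinity>"
    and x: "x \<in> msupp m" and c: "1 \<le> c" and "0 \<le> L" and R: "0 < R" "R \<le> s"
    and above: "\<And>r. r \<in> {0<..R} \<Longrightarrow> ennreal L < dratio m c r x"
  shows "measure m (cball x (R / c ^ k)) * L ^ k \<le> measure m (cball x R)"
proof -
  define M where "M k = measure m (cball x (R / c ^ k))" for k
  have r_k: "0 < R / c ^ k" "R / c ^ k \<le> R" for k
    using R c by (auto simp: field_simps order_trans[OF _ one_le_power[of c k]])
  have "L * M (Suc k) \<le> M k" for k
  proof -
    have cr: "c * (R / c ^ Suc k) = R / c ^ k" using c by (simp add: field_simps)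
    have "ennreal L < ennreal (M k / M (Suc k))"
      using above[of "R / c ^ Suc k"] r_k[of "Suc k"] r_k[of k] R
        dratio_eq_measure_ratio[OF sets fin x, of "R / c ^ Suc k" c]
      unfolding M_def cr by (simp del: power_Suc)
    then have "L < M k / M (Suc k)"
      using \<open>0 \<le> L\<close> by (simp add: ennreal_less_iff)
    moreover have "0 < M (Suc k)"
      unfolding M_def
      using measure_cball_pos_if_msupp[OF sets fin order_trans[OF r_k(2) R(2)] x r_k(1)] .
    ultimately show ?thesis by (simp add: field_simps)
  qed
  from mult_power_le_if_ratio_chain[of L M, OF this \<open>0 \<le> L\<close>] show ?thesis
    unfolding M_def by simp
qed

lemma INF_dratio_le_if_geometric_ball_decay:
  fixes mu m :: "'a::polish_space measure"
  assumes mu: "mms_measure mu" and m: "measure_on m" and x: "x \<in> msupp m"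
    and c: "1 < c" and K: "0 < K" and R: "0 < R"
    and lim: "Liminf (at_right 0) (\<lambda>r. emeasure m (cball x r) / emeasure mu (cball x r)) > 0"
    and decay: "geometric_ball_decay mu x c K"
  shows "(INF r\<in>{0<..R}. dratio m c r x) \<le> ennreal K"
proof (rule ccontr)
  assume "\<not> ?thesis"
  then obtain L' where L': "ennreal K < L'" "L' < (INF r\<in>{0<..R}. dratio m c r x)"
    using dense[of "ennreal K"] by (auto simp: not_le)
  then obtain L where L: "L' = ennreal L" "K < L"
    using K by (cases L') (auto simp: top.not_eq_extremum ennreal_less_iff)
  have above: "ennreal L < dratio m c r x" if "r \<in> {0<..R}" for r
    using L L' that by (metis INF_lower less_le_trans)
  obtain s where s: "0 < s" "emeasure m (cball x s) < \<infinity>"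
    using m unfolding measure_on_def by auto
  have sets: "sets m = sets borel" using m unfolding measure_on_def by simp
  obtain \<kappa> b where \<kappa>: "0 < \<kappa>" "0 < b" and lower:
    "\<And>r. 0 < r \<Longrightarrow> r < b \<Longrightarrow> r \<le> s \<Longrightarrow> \<kappa> * measure mu (cball x r) \<le> measure m (cball x r)"
    using noncollapsed_lower_bound[OF mu sets s(2) lim] by blast
  obtain \<rho> where \<rho>: "0 < \<rho>" "\<forall>R\<in>{0<..\<rho>}. \<exists>A>0. \<forall>k. A \<le> measure mu (cball x (R / c ^ k)) * K ^ k"
    using decay unfolding geometric_ball_decay_def by blast
  define R0 where "R0 = min (min R \<rho>) (min (b / 2) s)"
  have R0: "0 < R0" "R0 \<le> R" "R0 \<le> \<rho>" "R0 < b" "R0 \<le> s"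
    using R \<rho> \<kappa> s unfolding R0_def by auto
  obtain A where A: "0 < A" "\<And>k. A \<le> measure mu (cball x (R0 / c ^ k)) * K ^ k"
    using bspec[OF \<rho>(2), of R0] R0 by auto
  have r_k: "0 < R0 / c ^ k" "R0 / c ^ k \<le> R0" for k
    using R0 c by (auto simp: field_simps)
  have bounded: "\<kappa> * A * (L / K) ^ k \<le> measure m (cball x R0)" for k
  proof -
    have "\<kappa> * A * L ^ k \<le> \<kappa> * (measure mu (cball x (R0 / c ^ k)) * K ^ k) * L ^ k"
      using A(2)[of k] \<kappa> L K by (intro mult_right_mono mult_left_mono) auto
    also have "\<dots> = \<kappa> * measure mu (cball x (R0 / c ^ k)) * L ^ k * K ^ k"
      by (simp add: algebra_simps)
    also have "\<dots> \<le> measure m (cball x (R0 / c ^ k)) * L ^ k * K ^ k"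
      using lower[OF r_k(1) le_less_trans[OF r_k(2) R0(4)] order_trans[OF r_k(2) R0(5)]] L K
      by (intro mult_right_mono) auto
    also have "\<dots> \<le> measure m (cball x R0) * K ^ k"
      using measure_cball_mult_power_le_if_dratio_gt[OF sets s(2) x _ _ R0(1,5), of c L k] above R0 c L K
      by (intro mult_right_mono) auto
    finally show ?thesis using K by (simp add: field_simps)
  qed
  have "1 < L / K" using L K by simp
  then obtain n where "measure m (cball x R0) / (\<kappa> * A) < (L / K) ^ n"
    using real_arch_pow by blast
  then have "measure m (cball x R0) < \<kappa> * A * (L / K) ^ n" using \<kappa> A by (simp add: field_simps)
  then show False using bounded[of n] by simp
qed

lemma lowerC_le_if_geometric_ball_decay:
  assumes mu: "mms_measure mu" and m: "measure_on m" and wnc: "weakly_noncollapsed mu m"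
    and "1 < c" "0 < K" and decay: "\<And>x. geometric_ball_decay mu x c K"
  shows "lowerC m c \<le> ennreal K"
proof (rule lowerC_le)
  fix R :: real and x assume "0 < R" "x \<in> msupp m"
  moreover have "Liminf (at_right 0) (\<lambda>r. emeasure m (cball x r) / emeasure mu (cball x r)) > 0"
    using wnc \<open>x \<in> msupp m\<close> unfolding weakly_noncollapsed_def by (meson INF_lower less_le_trans)
  ultimately show "(INF r\<in>{0<..R}. dratio m c r x) \<le> ennreal K"
    using INF_dratio_le_if_geometric_ball_decay[OF mu m] assms(4,5) decay by blast
qed

lemma geometric_ball_decay_if_doubling:
  assumes mu: "mms_measure mu" and c: "1 \<le> c" and K: "0 \<le> K"
    and doubling: "\<And>\<rho>. 0 < \<rho> \<Longrightarrow> \<rho> \<le> 1 \<Longrightarrow> measure mu (cball x (c * \<rho>)) \<le> K * measure mu (cball x \<rho>)"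
  shows "geometric_ball_decay mu x c K"
  unfolding geometric_ball_decay_def
proof (rule exI[of _ 1], intro conjI ballI)
  fix R :: real assume R: "R \<in> {0<..1}"
  have "measure mu (cball x R) \<le> measure mu (cball x (R / c ^ k)) * K ^ k" for k
  proof (induction k)
    case (Suc k)
    have "1 \<le> c ^ Suc k" using c by (rule one_le_power)
    then have r: "0 < R / c ^ Suc k" "R / c ^ Suc k \<le> 1"
      using R by (auto simp: divide_le_eq_1)
    have "c * (R / c ^ Suc k) = R / c ^ k" using c by (simp add: field_simps)
    then have "measure mu (cball x (R / c ^ k)) * K ^ k
        \<le> (K * measure mu (cball x (R / c ^ Suc k))) * K ^ k"
      using doubling[OF r] K by (intro mult_right_mono) auto
    then show ?case using Suc.IH by (simp add: algebra_simps)
  qed simp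
  then show "\<exists>A>0. \<forall>k. A \<le> measure mu (cball x (R / c ^ k)) * K ^ k"
    using mms_measure_cball(2)[OF mu, of R x] R by auto
qed simp

lemma geometric_ball_decay_if_Qset:
  assumes mu: "mms_measure mu" and Q: "Q \<in> Qset mu 1" and c: "1 \<le> c"
  shows "geometric_ball_decay mu x c (c powr Q)"
proof -
  obtain C where C: "0 < C" and decay: "\<And>x r x' r'. 0 < r' \<Longrightarrow> 0 < r \<Longrightarrow> r < 1 \<Longrightarrow>
      cball x' r' \<subseteq> cball x r \<Longrightarrow>
      (r' / r) powr Q \<le> C * measure mu (cball x' r') / measure mu (cball x r)"
    using Q unfolding Qset_def by blast
  show ?thesis
    unfolding geometric_ball_decay_def
  proof (rule exI[of _ "1/2"], intro conjI ballI)
    fix R :: real assume R: "R \<in> {0<..1/2}"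
    have pos: "0 < measure mu (cball x R)" using mms_measure_cball(2)[OF mu] R by simp
    have "measure mu (cball x R) / C \<le> measure mu (cball x (R / c ^ k)) * (c powr Q) ^ k" for k
    proof -
      have r_k: "0 < R / c ^ k" "R / c ^ k \<le> R"
        using R c by (auto simp: field_simps order_trans[OF _ one_le_power[of c k]])
      have "(R / c ^ k / R) powr Q = 1 / (c powr Q) ^ k"
        using R c by (simp add: powr_divide powr_power powr_realpow[symmetric] powr_powr mult.commute)
      then have "1 / (c powr Q) ^ k \<le> C * measure mu (cball x (R / c ^ k)) / measure mu (cball x R)"
        using decay[of "R / c ^ k" R x x] subset_cball[OF r_k(2)] r_k R by auto
      then show ?thesis using pos C c by (simp add: field_simps)
    qed
    then show "\<exists>A>0. \<forall>k. A \<le> measure mu (cball x (R / c ^ k)) * (c powr Q) ^ k"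
      using pos C by (intro exI[of _ "measure mu (cball x R) / C"]) auto
  qed simp
qed

lemma unif_loc_doubling_power:
  assumes mu: "mms_measure mu" and "unif_loc_doubling mu"
  obtains C where "0 < C"
    "\<And>x \<rho>. 0 < \<rho> \<Longrightarrow> \<rho> \<le> 1 \<Longrightarrow> measure mu (cball x (2 ^ n * \<rho>)) \<le> C ^ n * measure mu (cball x \<rho>)"
proof -
  obtain C where C: "\<And>r x. r \<in> {0<..2 ^ n} \<Longrightarrow> measure mu (cball x (2 * r)) \<le> C * measure mu (cball x r)"
    using assms(2) unfolding unif_loc_doubling_def by (meson zero_less_numeral zero_less_power)
  have "0 < C * measure mu (cball undefined 1)"
    using C[of 1 undefined] mms_measure_cball(2)[OF mu, of 2 undefined] by simp
  then have "0 < C"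
    using mms_measure_cball(2)[OF mu, of 1 undefined] by (simp add: zero_less_mult_iff)
  moreover have "measure mu (cball x (2 ^ j * \<rho>)) \<le> C ^ j * measure mu (cball x \<rho>)"
    if "0 < \<rho>" "\<rho> \<le> 1" "j \<le> n" for x \<rho> j
    using that(3)
  proof (induction j)
    case (Suc j)
    have "2 ^ j * \<rho> \<le> 2 ^ n * 1"
      using that Suc.prems by (intro mult_mono power_increasing) auto
    then have "measure mu (cball x (2 * (2 ^ j * \<rho>))) \<le> C * measure mu (cball x (2 ^ j * \<rho>))"
      using that by (intro C) auto
    also have "\<dots> \<le> C * (C ^ j * measure mu (cball x \<rho>))"
      using Suc \<open>0 < C\<close> by (intro mult_left_mono) auto
    finally show ?case by (simp add: mult.assoc)
  qed simp
  ultimately show ?thesis using that by blast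
qed

lemma unif_loc_doubling_scale:
  assumes mu: "mms_measure mu" and "unif_loc_doubling mu"
  obtains K where "0 < K"
    "\<And>x \<rho>. 0 < \<rho> \<Longrightarrow> \<rho> \<le> 1 \<Longrightarrow> measure mu (cball x (c * \<rho>)) \<le> K * measure mu (cball x \<rho>)"
proof -
  obtain n where n: "c < 2 ^ n" using real_arch_pow[of 2 c] by auto
  obtain C where C: "0 < C"
    "\<And>x \<rho>. 0 < \<rho> \<Longrightarrow> \<rho> \<le> 1 \<Longrightarrow> measure mu (cball x (2 ^ n * \<rho>)) \<le> C ^ n * measure mu (cball x \<rho>)"
    using unif_loc_doubling_power[OF assms] by blast
  have "measure mu (cball x (c * \<rho>)) \<le> C ^ n * measure mu (cball x \<rho>)"
    if "0 < \<rho>" "\<rho> \<le> 1" for x \<rho>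
    using mms_measure_measure_cball_mono[OF mu, of "2 ^ n * \<rho>" "c * \<rho>" x] C(2)[OF that, of x] n that
    by (simp add: order_trans)
  then show ?thesis using that C(1) by (meson zero_less_power)
qed

lemma powr_le_two_powr_floor:
  fixes c Q :: real
  assumes "0 < c" "0 \<le> Q"
  shows "c powr Q \<le> 2 powr ((real_of_int \<lfloor>c\<rfloor> + 1) * Q)"
proof -
  define n where "n = nat (\<lfloor>c\<rfloor> + 1)"
  have n: "real n = real_of_int \<lfloor>c\<rfloor> + 1" using assms(1) unfolding n_def by simp
  have "c < real n" using n by linarith
  also have "\<dots> < 2 ^ n" using less_exp[of n] by (metis of_nat_less_iff of_nat_numeral of_nat_power)
  also have "\<dots> = 2 powr (real_of_int \<lfloor>c\<rfloor> + 1)" by (simp add: n[symmetric] powr_realpow)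
  finally have "c powr Q \<le> (2 powr (real_of_int \<lfloor>c\<rfloor> + 1)) powr Q"
    using assms by (intro powr_mono2) auto
  then show ?thesis by (simp add: powr_powr)
qed

lemma lowerC_le_one:
  assumes "measure_on m" "c \<le> 1"
  shows "lowerC m c \<le> 1"
  using lowerC_le INF_dratio_le_one[OF assms(1) _ assms(2)] by blast

lemma lowerC_finite_if_unif_loc_doubling:
  assumes mu: "mms_measure mu" "unif_loc_doubling mu"
    and m: "measure_on m" "weakly_noncollapsed mu m" and c: "1 < c"
  shows "lowerC m c < \<infinity>"
proof -
  obtain K where "0 < K"
    "\<And>x \<rho>. 0 < \<rho> \<Longrightarrow> \<rho> \<le> 1 \<Longrightarrow> measure mu (cball x (c * \<rho>)) \<le> K * measure mu (cball x \<rho>)"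
    using unif_loc_doubling_scale[OF mu] by blast
  then have "lowerC m c \<le> ennreal K"
    using lowerC_le_if_geometric_ball_decay[OF mu(1) m c] geometric_ball_decay_if_doubling[OF mu(1)] c
    by simp
  then show ?thesis using order.strict_trans1 by fastforce
qed

lemma lowerC_le_if_Qset:
  assumes mu: "mms_measure mu" and m: "measure_on m" "weakly_noncollapsed mu m"
    and c: "1 < c" and Q: "Q \<in> Qset mu 1"
  shows "lowerC m c \<le> ennreal (c powr Q)"
  using lowerC_le_if_geometric_ball_decay[OF mu m c] geometric_ball_decay_if_Qset[OF mu Q] c
  by simp

theorem mainTheorem5:
  fixes mu m :: "'a::polish_space measure"
  assumes "mms_measure mu" and "unif_loc_doubling mu"
    and "measure_on m" and "weakly_noncollapsed mu m"
  shows "unif_weak_asymp_doubling m \<and>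
         (\<forall>c>1. \<forall>Q\<in>Qset mu 1.
           lowerC m c \<le> ennreal (2 powr ((real_of_int \<lfloor>c\<rfloor> + 1) * Q)))"
proof -
  have "lowerC m c < \<infinity>" for c
  proof (cases "c \<le> 1")
    case True
    then show ?thesis
      using lowerC_le_one[OF assms(3)] order.strict_trans1 by fastforce
  next
    case False
    then show ?thesis using lowerC_finite_if_unif_loc_doubling[OF assms] by simp
  qed
  moreover have "lowerC m c \<le> ennreal (2 powr ((real_of_int \<lfloor>c\<rfloor> + 1) * Q))"
    if "1 < c" "Q \<in> Qset mu 1" for c Q
  proof -
    have "lowerC m c \<le> ennreal (c powr Q)"
      using lowerC_le_if_Qset assms(1,3,4) that by blast
    also have "\<dots> \<le> ennreal (2 powr ((real_of_int \<lfloor>c\<rfloor> + 1) * Q))"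
      using powr_le_two_powr_floor[of c Q] that unfolding Qset_def by (simp add: ennreal_leI)
    finally show ?thesis .
  qed
  ultimately show ?thesis unfolding unif_weak_asymp_doubling_def by blast
qed

end
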